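(* Assume the Composite Assumption and the KŁ-for-$g$ Assumption (see context), and let $0<\lambda\le\frac{2\tilde\delta}{\ell_h^2\sqrt{d_h}}$. Then for every $x\in\mathcal X$, $F^\lambda(x,\cdot)$ satisfies the extended KŁ property with parameters $\mu$ and $\theta$: $$\mathrm{dist}\big(0,-\nabla_yF^\lambda(x,y)+\mathcal N_{\mathcal Y}(y)\big)\ge\mu\Big(\max_{y'\in\mathcal Y}F^\lambda(x,y')-F^\lambda(x,y)\Big)^\theta\quad\forall y\in\mathcal Y.$$
   Context: Let $\mathcal X\subseteq\mathbb R^{d_x}$, $\mathcal Y\subseteq\mathbb R^{d_y}$ be nonempty closed convex sets and $\mathbb P$ a distribution with support $\Xi$. Let $\varphi:\mathbb R^{d_h}\times\mathbb R^{d_y}\times\Xi\to\mathbb R$, $h=(h_1,\dots,h_{d_h}):\mathbb R^{d_c}\to\mathbb R^{d_h}$, $c:\mathbb R^{d_x}\times\Xi\to\mathbb R^{d_c}$, with $\varphi$ and $c$ differentiable. Composite Assumption: (i) $\mathcal X$ compact with diameter $D_{\mathcal X}$; (ii) $\mathcal Y$ compact with diameter $D_{\mathcal Y}$; (iii) each $c(\cdot;\xi)$ is $\ell_c$-Lipschitz; (iv) each $h_j$ is convex and $\ell_h$-Lipschitz; (v) each $\varphi(\cdot,\cdot;\xi)$ is nondecreasing in its first argument and $\ell_\varphi$-Lipschitz; (vi) $\mathbb E\|\nabla_xc(x_1;\xi)-\nabla_xc(x_2;\xi)\|^2\le L_c^2\|x_1-x_2\|^2$; (vii) $\nabla_1\varphi$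 and $\nabla_y\varphi$ are $L_\varphi$-Lipschitz jointly in $(u,y)$ in the sense $\|\nabla\varphi(u_1,y_1;\xi)-\nabla\varphi(u_2,y_2;\xi)\|^2\le L_\varphi^2(\|u_1-u_2\|^2+\|y_1-y_2\|^2)$. KŁ-for-$g$ Assumption: there exist $\tilde\delta>0$, $\mu>0$, $\theta\in[0,1]$ such that for all $x\in\mathcal X$ and all $u:\Xi\to\mathbb R^{d_h}$ with $\|u(\xi)-h(c(x;\xi))\|\le\tilde\delta$ for all $\xi\in\Xi$, the function $g(u,y):=\mathbb E_{\xi\sim\mathbb P}[\varphi(u(\xi),y;\xi)]$ satisfies $\mathrm{dist}(0,-\nabla_yg(u,y)+\mathcal N_{\mathcal Y}(y))\ge\mu[\max_{y'\in\mathcal Y}g(u,y')-g(u,y)]^\theta$ for all $y\in\mathcal Y$. Smoothing: $h^\lambda_j(w)=\min_{q}\{h_j(q)+\frac1{2\lambda}\|w-q\|^2\}$, $h^\lambda=(h^\lambda_j)_j$, $F^\lambda(x,y)=\mathbb E_{\xi\sim\mathbb P}[\varphi(h^\lambda(c(x;\xi)),y;\xi)]$. $\mathcal N_{\mathcal Y}$ is the normal cone. *)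

theory Defs
  imports "HOL-Analysis.Analysis" "HOL-Probability.Probability"
begin

definition grad :: "('a::real_inner \<Rightarrow> real) \<Rightarrow> 'a \<Rightarrow> 'a" where
  "grad f p = (SOME v. (f has_derivative (\<lambda>h. v \<bullet> h)) (at p))"

definition normal_cone :: "'a::real_inner set \<Rightarrow> 'a \<Rightarrow> 'a set" where
  "normal_cone S y = {n. \<forall>y'\<in>S. n \<bullet> (y' - y) \<le> 0}"

definition moreau :: "real \<Rightarrow> ('a::real_normed_vector \<Rightarrow> real) \<Rightarrow> 'a \<Rightarrow> real" where
  "moreau lam f w = (INF q. f q + (norm (w - q))^2 / (2 * lam))"

definition hvec :: "('j::finite \<Rightarrow> 'c \<Rightarrow> real) \<Rightarrow> 'c \<Rightarrow> real^'j" where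
  "hvec h w = (\<chi> j. h j w)"

definition hlam :: "real \<Rightarrow> ('j::finite \<Rightarrow> 'c::real_normed_vector \<Rightarrow> real) \<Rightarrow> 'c \<Rightarrow> real^'j" where
  "hlam lam h w = (\<chi> j. moreau lam (h j) w)"

definition gfun :: "'xi measure \<Rightarrow> (real^'j \<Rightarrow> 'y \<Rightarrow> 'xi \<Rightarrow> real) \<Rightarrow> ('xi \<Rightarrow> real^'j) \<Rightarrow> 'y \<Rightarrow> real" where
  "gfun M \<phi> u y = (\<integral>\<xi>. \<phi> (u \<xi>) y \<xi> \<partial>M)"

definition Flam :: "'xi measure \<Rightarrow> (real^'j \<Rightarrow> 'y \<Rightarrow> 'xi \<Rightarrow> real) \<Rightarrow> ('j::finite \<Rightarrow> 'c::real_normed_vector \<Rightarrow> real)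
    \<Rightarrow> ('x \<Rightarrow> 'xi \<Rightarrow> 'c) \<Rightarrow> real \<Rightarrow> 'x \<Rightarrow> 'y \<Rightarrow> real" where
  "Flam M \<phi> h c lam x y = (\<integral>\<xi>. \<phi> (hlam lam h (c x \<xi>)) y \<xi> \<partial>M)"

definition kl_res :: "'y::real_inner set \<Rightarrow> 'y \<Rightarrow> 'y \<Rightarrow> real" where
  "kl_res Y v y = infdist 0 ((\<lambda>n. - v + n) ` normal_cone Y y)"

end

theory Submission
  imports Defs
begin

text \<open>The Moreau envelope of an \<open>L\<close>-Lipschitz function is within \<open>\<lambda> L\<^sup>2 / 2\<close> of the function,
  so under the step-size bound \<open>h\<^sup>\<lambda>(c(x;\<xi>))\<close> lies within \<open>\<delta>\<close> of \<open>h(c(x;\<xi>))\<close> for every \<open>\<xi>\<close>.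
  Since \<open>F\<^sup>\<lambda>(x,\<cdot>)\<close> is literally \<open>g(u,\<cdot>)\<close> for \<open>u = h\<^sup>\<lambda> \<circ> c(x;\<cdot>)\<close>, the KL assumption for \<open>g\<close>
  applies verbatim.\<close>

lemma lipschitz_le_proximal_objective:
  fixes f :: "'a::real_normed_vector \<Rightarrow> real"
  assumes lam: "0 < lam" and L: "L-lipschitz_on UNIV f"
  shows "f w - lam * L^2 / 2 \<le> f q + (norm (w - q))^2 / (2 * lam)"
proof -
  have "\<bar>f w - f q\<bar> \<le> L * norm (w - q)"
    using lipschitz_onD[OF L, of w q] by (simp add: dist_norm dist_real_def)
  moreover have "0 \<le> (norm (w - q) - lam * L)^2 / (2 * lam)"
    using lam by simp
  moreover have "(norm (w - q) - lam * L)^2 / (2 * lam)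
      = (norm (w - q))^2 / (2 * lam) - L * norm (w - q) + lam * L^2 / 2"
    using lam by (simp add: field_simps power2_eq_square)
  ultimately show ?thesis by linarith
qed

lemma abs_moreau_diff_le:
  fixes f :: "'a::real_normed_vector \<Rightarrow> real"
  assumes lam: "0 < lam" and L: "L-lipschitz_on UNIV f"
  shows "\<bar>moreau lam f w - f w\<bar> \<le> lam * L^2 / 2"
proof -
  note objective_bound = lipschitz_le_proximal_objective[OF lam L, of w]
  have "f w - lam * L^2 / 2 \<le> moreau lam f w"
    unfolding moreau_def by (rule cINF_greatest) (use objective_bound in auto)
  moreover have "moreau lam f w \<le> f w + (norm (w - w))^2 / (2 * lam)"
    unfolding moreau_def
    by (rule cINF_lower) (use objective_bound in \<open>auto intro!: bdd_belowI2\<close>)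
  ultimately show ?thesis
    using lam L lipschitz_on_nonneg by force
qed

lemma norm_le_sqrt_card_cart:
  fixes v :: "real^'j::finite"
  assumes "\<And>i. \<bar>v $ i\<bar> \<le> b"
  shows "norm v \<le> sqrt (real CARD('j)) * b"
proof -
  have "norm v = L2_set (\<lambda>i. \<bar>v $ i\<bar>) UNIV"
    by (simp add: norm_vec_def L2_set_def)
  also have "\<dots> \<le> L2_set (\<lambda>i::'j. b) UNIV"
    using assms by (intro L2_set_mono) auto
  also have "\<dots> = sqrt (real CARD('j)) * b"
    using assms[of undefined] by (simp add: L2_set_constant)
  finally show ?thesis .
qed

lemma norm_hlam_minus_hvec_le:
  fixes h :: "'j::finite \<Rightarrow> 'c::real_normed_vector \<Rightarrow> real"
  assumes "0 < lam" and "\<And>j. L-lipschitz_on UNIV (h j)"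
  shows "norm (hlam lam h w - hvec h w) \<le> sqrt (real CARD('j)) * (lam * L^2 / 2)"
  by (rule norm_le_sqrt_card_cart)
     (use abs_moreau_diff_le[OF assms(1,2)] in \<open>simp add: hlam_def hvec_def\<close>)

lemma Flam_eq_gfun: "Flam M \<phi> h c lam x = gfun M \<phi> (\<lambda>\<xi>. hlam lam h (c x \<xi>))"
  by (rule ext) (simp add: Flam_def gfun_def)

theorem lemmaB4:
  fixes M :: "'xi measure"
    and X :: "'x::euclidean_space set" and Y :: "'y::euclidean_space set"
    and \<phi> :: "real^'j::finite \<Rightarrow> 'y \<Rightarrow> 'xi \<Rightarrow> real"
    and h :: "'j \<Rightarrow> 'c::euclidean_space \<Rightarrow> real"
    and c :: "'x \<Rightarrow> 'xi \<Rightarrow> 'c"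
    and DX DY lc lh l\<phi> Lc L\<phi> \<delta> \<mu> \<theta> lam :: real
  assumes P: "prob_space M"
    and X: "X \<noteq> {}" "closed X" "convex X"
    and Y: "Y \<noteq> {}" "closed Y" "convex Y"
    and \<phi>_diff: "\<And>\<xi>. \<xi> \<in> space M \<Longrightarrow> (\<lambda>p. \<phi> (fst p) (snd p) \<xi>) differentiable_on UNIV"
    and c_diff: "\<And>\<xi>. \<xi> \<in> space M \<Longrightarrow> (\<lambda>x. c x \<xi>) differentiable_on UNIV"
    \<comment> \<open>Composite Assumption\<close>
    and A1: "compact X" "diameter X = DX"
    and A2: "compact Y" "diameter Y = DY"
    and A3: "\<And>\<xi>. \<xi> \<in> space M \<Longrightarrow> lc-lipschitz_on UNIV (\<lambda>x. c x \<xi>)"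
    and A4: "\<And>j. convex_on UNIV (h j)" "\<And>j. lh-lipschitz_on UNIV (h j)"
    and A5a: "\<And>\<xi> u1 u2 y. \<xi> \<in> space M \<Longrightarrow> (\<forall>i. u1 $ i \<le> u2 $ i) \<Longrightarrow> \<phi> u1 y \<xi> \<le> \<phi> u2 y \<xi>"
    and A5b: "\<And>\<xi>. \<xi> \<in> space M \<Longrightarrow> l\<phi>-lipschitz_on UNIV (\<lambda>p. \<phi> (fst p) (snd p) \<xi>)"
    and A6: "\<And>x1 x2. (\<integral>\<xi>. (onorm (\<lambda>v. frechet_derivative (\<lambda>x. c x \<xi>) (at x1) v
                                   - frechet_derivative (\<lambda>x. c x \<xi>) (at x2) v))^2 \<partial>M)
                      \<le> Lc^2 * (norm (x1 - x2))^2"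
    and A7: "\<And>\<xi> u1 y1 u2 y2. \<xi> \<in> space M \<Longrightarrow>
               (norm (grad (\<lambda>p. \<phi> (fst p) (snd p) \<xi>) (u1, y1) - grad (\<lambda>p. \<phi> (fst p) (snd p) \<xi>) (u2, y2)))^2
                 \<le> L\<phi>^2 * ((norm (u1 - u2))^2 + (norm (y1 - y2))^2)"
    \<comment> \<open>KL-for-g Assumption\<close>
    and KL_par: "\<delta> > 0" "\<mu> > 0" "0 \<le> \<theta>" "\<theta> \<le> 1"
    and KL: "\<And>x u y. x \<in> X \<Longrightarrow> (\<forall>\<xi>\<in>space M. norm (u \<xi> - hvec h (c x \<xi>)) \<le> \<delta>) \<Longrightarrow> y \<in> Y \<Longrightarrow>
               kl_res Y (grad (gfun M \<phi> u) y) y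
                 \<ge> \<mu> * ((SUP y'\<in>Y. gfun M \<phi> u y') - gfun M \<phi> u y) powr \<theta>"
    \<comment> \<open>step size: 0 < lam <= 2 delta / (lh^2 sqrt d_h), written multiplicatively\<close>
    and lam: "0 < lam" "lam * lh^2 * sqrt (real CARD('j)) \<le> 2 * \<delta>"
  shows "\<forall>x\<in>X. \<forall>y\<in>Y.
           kl_res Y (grad (Flam M \<phi> h c lam x) y) y
             \<ge> \<mu> * ((SUP y'\<in>Y. Flam M \<phi> h c lam x y') - Flam M \<phi> h c lam x y) powr \<theta>"
proof (intro ballI)
  fix x y assume x: "x \<in> X" and y: "y \<in> Y"
  have smoothing_close: "norm (hlam lam h (c x \<xi>) - hvec h (c x \<xi>)) \<le> \<delta>" for \<xi>
  proof -
    have "norm (hlam lam h (c x \<xi>) - hvec h (c x \<xi>)) \<le> sqrt (real CARD('j)) * (lam * lh^2 / 2)"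
      using norm_hlam_minus_hvec_le[OF lam(1) A4(2)] .
    also have "\<dots> \<le> \<delta>"
      using lam(2) by (simp add: field_simps)
    finally show ?thesis .
  qed
  show "kl_res Y (grad (Flam M \<phi> h c lam x) y) y
          \<ge> \<mu> * ((SUP y'\<in>Y. Flam M \<phi> h c lam x y') - Flam M \<phi> h c lam x y) powr \<theta>"
    unfolding Flam_eq_gfun using smoothing_close by (intro KL[OF x _ y]) blast
qed

end
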